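(* Let $k\ge 0$. (a) If $u\in\mathcal P_k^\perp(K)$ satisfies $u|_e=0$ on some face $e\in\mathcal E(K)$, then $u=0$. (b) If $\mathbf q\in\boldsymbol{\mathcal P}_k^\perp(K)$ satisfies $\mathbf q\cdot\mathbf n=0$ on $\partial K$, then $\mathbf q=\mathbf 0$.
   Context: $K\subset\mathbb R^d$ ($d\in\{2,3\}$) is a nondegenerate triangle/tetrahedron with outward unit normal $\mathbf n$ and set of faces (edges if $d=2$) $\mathcal E(K)$. $\mathcal P_k(K)$ denotes polynomials of total degree at most $k$ on $K$, with $\mathcal P_{-1}(K)=\{0\}$. $(\cdot,\cdot)_K$ is the $L^2(K)$ inner product. $\mathcal P_k^\perp(K)=\{u\in\mathcal P_k(K):(u,v)_K=0\ \forall v\in\mathcal P_{k-1}(K)\}$ and $\boldsymbol{\mathcal P}_k^\perp(K)=\mathcal P_k^\perp(K)^d$. *)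

theory Defs
  imports "HOL-Analysis.Analysis"
begin

definition poly_le :: "nat \<Rightarrow> (real^'n \<Rightarrow> real) \<Rightarrow> bool" where
  "poly_le k f \<longleftrightarrow>
     (\<exists>A c. finite A \<and> (\<forall>\<alpha>\<in>A. (\<Sum>i\<in>UNIV. \<alpha> i) \<le> k) \<and>
        (\<forall>x. f x = (\<Sum>\<alpha>\<in>A. c \<alpha> * (\<Prod>i\<in>UNIV. (x $ i) ^ (\<alpha> i)))))"

definition L2_inner :: "(real^'n) set \<Rightarrow> (real^'n \<Rightarrow> real) \<Rightarrow> (real^'n \<Rightarrow> real) \<Rightarrow> real" where
  "L2_inner K u v = integral K (\<lambda>x. u x * v x)"

text \<open>P_k^perp(K): elements of P_k orthogonal in L2(K) to P_{k-1}, with P_{-1} = {0}.\<close>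
definition poly_perp :: "(real^'n) set \<Rightarrow> nat \<Rightarrow> (real^'n \<Rightarrow> real) \<Rightarrow> bool" where
  "poly_perp K k u \<longleftrightarrow> poly_le k u \<and>
     (k = 0 \<or> (\<forall>v. poly_le (k - 1) v \<longrightarrow> L2_inner K u v = 0))"

definition simplex_faces :: "(real^'n) set \<Rightarrow> (real^'n) set set" where
  "simplex_faces V = {convex hull (V - {v}) | v. v \<in> V}"

definition outward_normal :: "(real^'n) set \<Rightarrow> (real^'n) set \<Rightarrow> real^'n \<Rightarrow> bool" where
  "outward_normal K e n \<longleftrightarrow> norm n = 1 \<and>
     (\<forall>x\<in>e. \<forall>y\<in>e. n \<bullet> (x - y) = 0) \<and>
     (\<forall>x\<in>e. \<forall>y\<in>K. n \<bullet> (y - x) \<le> 0)"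

end

(* Write u \<in> P_k(K) in barycentric coordinates \<lambda>_0, ..., \<lambda>_d of K. If u vanishes on the face
   {\<lambda>_j = 0}, then u = \<lambda>_j p with deg p \<le> k - 1, so orthogonality to P_(k-1) gives
   \<integral>_K \<lambda>_j p^2 = (u, p)_K = 0; since \<lambda>_j > 0 in the interior of K, p = 0. For (b), each
   q \<cdot> n_e lies in P_k^perp and vanishes on e, hence on K by (a); d of the normals span R^d.
   The argument works in every dimension d. *)

theory Submission
  imports Defs
begin

section \<open>Polynomials of bounded total degree\<close>

lemma poly_le_mono: "poly_le a f \<Longrightarrow> a \<le> b \<Longrightarrow> poly_le b f"
  unfolding poly_le_def by (meson order_trans)

lemma poly_le_const: "poly_le k (\<lambda>x. c)"
  unfolding poly_le_def
  by (rule exI[of _ "{\<lambda>i. 0}"], rule exI[of _ "\<lambda>_. c"]) simp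

lemma poly_le_component: "poly_le 1 (\<lambda>x::real^'n. x $ j)"
  unfolding poly_le_def
proof (rule exI[of _ "{\<lambda>i. if i = j then 1 else 0}"], rule exI[of _ "\<lambda>_. 1"], intro conjI allI)
  fix x :: "real^'n"
  have "(\<Prod>i\<in>UNIV. (x $ i) ^ (if i = j then 1 else 0)) = (\<Prod>i\<in>UNIV. if i = j then x $ i else 1)"
    by (rule prod.cong) auto
  also have "\<dots> = x $ j" by (simp add: prod.delta)
  finally show "x $ j = (\<Sum>\<alpha>\<in>{\<lambda>i. if i = j then 1 else 0}. 1 * (\<Prod>i\<in>UNIV. (x $ i) ^ \<alpha> i))"
    by simp
qed auto

lemma poly_le_add:
  assumes "poly_le k f" "poly_le k g" shows "poly_le k (\<lambda>x. f x + g x)"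
proof -
  obtain A c where A: "finite A" "\<forall>\<alpha>\<in>A. (\<Sum>i\<in>UNIV. \<alpha> i) \<le> k"
    "\<forall>x. f x = (\<Sum>\<alpha>\<in>A. c \<alpha> * (\<Prod>i\<in>UNIV. (x $ i) ^ (\<alpha> i)))"
    using assms(1) unfolding poly_le_def by blast
  obtain B d where B: "finite B" "\<forall>\<alpha>\<in>B. (\<Sum>i\<in>UNIV. \<alpha> i) \<le> k"
    "\<forall>x. g x = (\<Sum>\<alpha>\<in>B. d \<alpha> * (\<Prod>i\<in>UNIV. (x $ i) ^ (\<alpha> i)))"
    using assms(2) unfolding poly_le_def by blast
  let ?e = "\<lambda>\<alpha>. (if \<alpha> \<in> A then c \<alpha> else 0) + (if \<alpha> \<in> B then d \<alpha> else 0)"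
  show ?thesis unfolding poly_le_def
  proof (rule exI[of _ "A \<union> B"], rule exI[of _ ?e], intro conjI allI)
    fix x :: "real^'a"
    let ?m = "\<lambda>\<alpha>. (\<Prod>i\<in>UNIV. (x $ i) ^ (\<alpha> i))"
    have "(\<Sum>\<alpha>\<in>A \<union> B. ?e \<alpha> * ?m \<alpha>) = (\<Sum>\<alpha>\<in>A \<union> B. (if \<alpha> \<in> A then c \<alpha> * ?m \<alpha> else 0)
       + (if \<alpha> \<in> B then d \<alpha> * ?m \<alpha> else 0))"
      by (rule sum.cong) (auto simp: algebra_simps)
    also have "\<dots> = f x + g x"
      using A B by (simp add: sum.distrib sum.If_cases Int_absorb1 Int_absorb2)
    finally show "f x + g x = (\<Sum>\<alpha>\<in>A \<union> B. ?e \<alpha> * ?m \<alpha>)" by simp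
  qed (use A B in auto)
qed

lemma poly_le_mult:
  assumes "poly_le a f" "poly_le b g" shows "poly_le (a + b) (\<lambda>x. f x * g x)"
proof -
  obtain A c where A: "finite A" "\<forall>\<alpha>\<in>A. (\<Sum>i\<in>UNIV. \<alpha> i) \<le> a"
    "\<forall>x. f x = (\<Sum>\<alpha>\<in>A. c \<alpha> * (\<Prod>i\<in>UNIV. (x $ i) ^ (\<alpha> i)))"
    using assms(1) unfolding poly_le_def by blast
  obtain B d where B: "finite B" "\<forall>\<alpha>\<in>B. (\<Sum>i\<in>UNIV. \<alpha> i) \<le> b"
    "\<forall>x. g x = (\<Sum>\<alpha>\<in>B. d \<alpha> * (\<Prod>i\<in>UNIV. (x $ i) ^ (\<alpha> i)))"
    using assms(2) unfolding poly_le_def by blast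
  define h where "h = (\<lambda>p::('a\<Rightarrow>nat)\<times>('a\<Rightarrow>nat). \<lambda>i. fst p i + snd p i)"
  define e where "e = (\<lambda>\<gamma>. \<Sum>p\<in>{p\<in>A\<times>B. h p = \<gamma>}. c (fst p) * d (snd p))"
  show ?thesis unfolding poly_le_def
  proof (rule exI[of _ "h ` (A \<times> B)"], rule exI[of _ e], intro conjI allI ballI)
    show "finite (h ` (A \<times> B))" using A B by simp
  next
    fix \<gamma> assume "\<gamma> \<in> h ` (A \<times> B)"
    then obtain \<alpha> \<beta> where "\<alpha> \<in> A" "\<beta> \<in> B" "\<gamma> = h (\<alpha>, \<beta>)" by auto
    then show "(\<Sum>i\<in>UNIV. \<gamma> i) \<le> a + b" using A B by (simp add: h_def sum.distrib add_mono)
  next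
    fix x :: "real^'a"
    let ?m = "\<lambda>\<alpha>. (\<Prod>i\<in>UNIV. (x $ i) ^ (\<alpha> i))"
    have "f x * g x = (\<Sum>\<alpha>\<in>A. \<Sum>\<beta>\<in>B. (c \<alpha> * ?m \<alpha>) * (d \<beta> * ?m \<beta>))"
      using A B by (simp add: sum_product)
    also have "\<dots> = (\<Sum>p\<in>A\<times>B. c (fst p) * d (snd p) * ?m (h p))"
      by (simp add: sum.cartesian_product case_prod_beta h_def power_add prod.distrib mult_ac)
    also have "\<dots> = (\<Sum>\<gamma>\<in>h ` (A\<times>B). \<Sum>p\<in>{p\<in>A\<times>B. h p = \<gamma>}. c (fst p) * d (snd p) * ?m (h p))"
      using A B by (intro sum.image_gen) simp
    also have "\<dots> = (\<Sum>\<gamma>\<in>h ` (A\<times>B). e \<gamma> * ?m \<gamma>)"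
      unfolding e_def sum_distrib_right by (intro sum.cong refl) auto
    finally show "f x * g x = (\<Sum>\<gamma>\<in>h ` (A\<times>B). e \<gamma> * ?m \<gamma>)" .
  qed
qed

lemma poly_le_cmult: "poly_le k f \<Longrightarrow> poly_le k (\<lambda>x. c * f x)"
  using poly_le_mult[OF poly_le_const[of 0 c]] by simp

lemma poly_le_sum:
  assumes "finite S" "\<And>s. s \<in> S \<Longrightarrow> poly_le k (f s)"
  shows "poly_le k (\<lambda>x. \<Sum>s\<in>S. f s x)"
  using assms by (induction S rule: finite_induct) (auto intro: poly_le_add poly_le_const)

lemma poly_le_prod:
  assumes "finite S" "\<And>s. s \<in> S \<Longrightarrow> poly_le (d s) (f s)"
  shows "poly_le (\<Sum>s\<in>S. d s) (\<lambda>x. \<Prod>s\<in>S. f s x)"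
  using assms by (induction S rule: finite_induct) (auto intro: poly_le_mult poly_le_const)

lemma poly_le_power: "poly_le a f \<Longrightarrow> poly_le (a * n) (\<lambda>x. f x ^ n)"
  using poly_le_prod[of "{..<n}" "\<lambda>_. a" "\<lambda>_. f"] by (simp add: mult.commute)

lemma poly_le_monomial:
  assumes "\<And>i. poly_le 1 (\<lambda>x. g x $ i)"
  shows "poly_le (\<Sum>i\<in>UNIV. \<alpha> i) (\<lambda>x. \<Prod>i\<in>UNIV. (g x $ i) ^ (\<alpha> i))"
  by (rule poly_le_prod) (use poly_le_power[OF assms] in force)+

lemma poly_le_compose:
  fixes g :: "real^'m \<Rightarrow> real^'n"
  assumes "poly_le k f" "\<And>i. poly_le 1 (\<lambda>x. g x $ i)"
  shows "poly_le k (\<lambda>x. f (g x))"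
proof -
  obtain A c where A: "finite A" "\<forall>\<alpha>\<in>A. (\<Sum>i\<in>UNIV. \<alpha> i) \<le> k"
    "\<forall>x. f x = (\<Sum>\<alpha>\<in>A. c \<alpha> * (\<Prod>i\<in>UNIV. (x $ i) ^ (\<alpha> i)))"
    using assms(1) unfolding poly_le_def by blast
  have "poly_le k (\<lambda>x. \<Sum>\<alpha>\<in>A. c \<alpha> * (\<Prod>i\<in>UNIV. (g x $ i) ^ (\<alpha> i)))"
    using A(1,2) by (intro poly_le_sum poly_le_cmult poly_le_mono[OF poly_le_monomial[OF assms(2)]]) auto
  then show ?thesis using A(3) by simp
qed

lemma poly_le_affine: "poly_le 1 (\<lambda>x::real^'n. (\<Sum>j\<in>UNIV. a j * x $ j) + b)"
  by (intro poly_le_add poly_le_sum poly_le_cmult poly_le_component poly_le_const) simp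

lemma continuous_on_poly_le:
  assumes "poly_le k f" shows "continuous_on S f"
proof -
  obtain A c where "\<forall>x. f x = (\<Sum>\<alpha>\<in>A. c \<alpha> * (\<Prod>i\<in>UNIV. (x $ i) ^ (\<alpha> i)))"
    using assms unfolding poly_le_def by blast
  then have "f = (\<lambda>x. \<Sum>\<alpha>\<in>A. c \<alpha> * (\<Prod>i\<in>UNIV. (x $ i) ^ (\<alpha> i)))" by auto
  then show ?thesis
    by (simp add: continuous_on_sum continuous_on_mult continuous_on_prod continuous_on_power
        continuous_on_component)
qed

text \<open>Every monomial containing \<open>y\<^sub>i\<close> gives up one factor \<open>y\<^sub>i\<close> to \<open>W\<close>; the others cancel.\<close>
lemma poly_le_split_component:
  fixes P :: "real^'n \<Rightarrow> real"
  assumes "poly_le k P"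
  obtains W where "poly_le (k - 1) W" "k = 0 \<Longrightarrow> W = (\<lambda>_. 0)"
    "\<And>y. P y = P (\<chi> j. if j = i then 0 else y $ j) + y $ i * W y"
proof -
  obtain A c where A: "finite A" "\<forall>\<alpha>\<in>A. (\<Sum>j\<in>UNIV. \<alpha> j) \<le> k"
    "\<forall>x. P x = (\<Sum>\<alpha>\<in>A. c \<alpha> * (\<Prod>j\<in>UNIV. (x $ j) ^ (\<alpha> j)))"
    using assms unfolding poly_le_def by blast
  define A1 where "A1 = {\<alpha>\<in>A. \<alpha> i \<noteq> 0}"
  define dec where "dec = (\<lambda>\<alpha>::'n\<Rightarrow>nat. \<alpha>(i := \<alpha> i - 1))"
  let ?m = "\<lambda>\<alpha> (y::real^'n). \<Prod>j\<in>UNIV. (y $ j) ^ (\<alpha> j)"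
  define W where "W = (\<lambda>y. \<Sum>\<alpha>\<in>A1. c \<alpha> * ?m (dec \<alpha>) y)"
  have m_split: "?m \<alpha> y = y $ i ^ \<alpha> i * (\<Prod>j\<in>UNIV-{i}. (y $ j) ^ (\<alpha> j))" for \<alpha> y
    by (simp add: prod.remove)
  have dec_degree: "(\<Sum>j\<in>UNIV. dec \<alpha> j) + 1 = (\<Sum>j\<in>UNIV. \<alpha> j)" if "\<alpha> i \<noteq> 0" for \<alpha>
  proof -
    have "(\<Sum>j\<in>UNIV-{i}. dec \<alpha> j) = (\<Sum>j\<in>UNIV-{i}. \<alpha> j)"
      by (rule sum.cong) (auto simp: dec_def)
    then show ?thesis using that by (simp add: dec_def sum.remove[of UNIV i])
  qed
  have "poly_le (k - 1) W" unfolding W_def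
  proof (rule poly_le_sum)
    fix \<alpha> assume "\<alpha> \<in> A1"
    then have "(\<Sum>j\<in>UNIV. dec \<alpha> j) \<le> k - 1" using dec_degree[of \<alpha>] A(2) by (auto simp: A1_def)
    then show "poly_le (k - 1) (\<lambda>y. c \<alpha> * ?m (dec \<alpha>) y)"
      by (intro poly_le_cmult poly_le_mono[OF poly_le_monomial[OF poly_le_component]])
  qed (use A(1) in \<open>simp add: A1_def\<close>)
  moreover have "W = (\<lambda>_. 0)" if "k = 0"
  proof -
    have "\<alpha> i \<le> (\<Sum>j\<in>UNIV. \<alpha> j)" for \<alpha> :: "'n \<Rightarrow> nat" by (rule member_le_sum) auto
    then have "A1 = {}" using A(2) that by (force simp: A1_def)
    then show ?thesis by (simp add: W_def)
  qed
  moreover have "P y = P (\<chi> j. if j = i then 0 else y $ j) + y $ i * W y" for y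
  proof -
    let ?z = "(\<chi> j. if j = i then 0 else y $ j) :: real^'n"
    have rest: "(\<Prod>j\<in>UNIV-{i}. (?z $ j) ^ (\<beta> j)) = (\<Prod>j\<in>UNIV-{i}. (y $ j) ^ (\<beta> j))" for \<beta>
      by (rule prod.cong) auto
    have rest_dec: "(\<Prod>j\<in>UNIV-{i}. (y $ j) ^ (dec \<alpha> j)) = (\<Prod>j\<in>UNIV-{i}. (y $ j) ^ (\<alpha> j))" for \<alpha>
      by (rule prod.cong) (auto simp: dec_def)
    have monomial_diff: "c \<alpha> * ?m \<alpha> y - c \<alpha> * ?m \<alpha> ?z
        = (if \<alpha> \<in> A1 then y $ i * (c \<alpha> * ?m (dec \<alpha>) y) else 0)" if "\<alpha> \<in> A" for \<alpha>
    proof (cases "\<alpha> i")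
      case 0
      then show ?thesis using rest[of \<alpha>] unfolding m_split by (simp add: A1_def)
    next
      case (Suc n)
      then show ?thesis using that rest_dec[of \<alpha>] unfolding m_split by (simp add: A1_def dec_def)
    qed
    have "P y - P ?z = (\<Sum>\<alpha>\<in>A. c \<alpha> * ?m \<alpha> y - c \<alpha> * ?m \<alpha> ?z)"
      using A(3) by (simp add: sum_subtractf)
    also have "\<dots> = (\<Sum>\<alpha>\<in>A. if \<alpha> \<in> A1 then y $ i * (c \<alpha> * ?m (dec \<alpha>) y) else 0)"
      using monomial_diff by (rule sum.cong[OF refl])
    also have "\<dots> = y $ i * W y"
      using A(1) by (simp add: sum.If_cases A1_def Int_def W_def sum_distrib_left)
    finally show ?thesis by simp
  qed
  ultimately show ?thesis using that by blast
qed

section \<open>Integrals over compact sets\<close>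

lemma integrable_continuous_compact:
  fixes f :: "'a::euclidean_space \<Rightarrow> real"
  assumes "compact S" "continuous_on S f" shows "f integrable_on S"
proof -
  have "(\<lambda>x. indicator S x *\<^sub>R f x) integrable_on UNIV"
    by (rule integrable_on_lborel[OF borel_integrable_compact[OF assms]])
  moreover have "(\<lambda>x. indicator S x *\<^sub>R f x) = (\<lambda>x. if x \<in> S then f x else 0)"
    by (auto simp: indicator_def)
  ultimately show ?thesis using integrable_restrict_UNIV by metis
qed

lemma integral_nonneg_eq_0_imp_interior:
  fixes f :: "'a::euclidean_space \<Rightarrow> real"
  assumes "compact K" "continuous_on K f" "\<And>x. x \<in> K \<Longrightarrow> 0 \<le> f x"
    and "integral K f = 0" "x \<in> interior K"
  shows "f x = 0"
proof -
  obtain a b where ab: "cbox a b \<subseteq> interior K" "x \<in> box a b"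
    using open_contains_cbox[OF open_interior assms(5)] by metis
  then have sub: "cbox a b \<subseteq> K" using interior_subset by blast
  have cont: "continuous_on (cbox a b) f" using continuous_on_subset[OF assms(2) sub] .
  have int_box: "f integrable_on cbox a b" using integrable_continuous[OF cont] .
  have "integral (cbox a b) f \<le> integral K f"
    by (rule integral_subset_le[OF sub int_box integrable_continuous_compact[OF assms(1,2)]])
      (use assms(3) in auto)
  moreover have "0 \<le> integral (cbox a b) f"
    by (rule integral_nonneg[OF int_box]) (use assms(3) sub in auto)
  ultimately have "integral (cbox a b) f = 0" using assms(4) by linarith
  then have "(f has_integral 0) (cbox a b)" using int_box by (metis has_integral_integral)
  moreover have "\<And>y. y \<in> box a b \<Longrightarrow> 0 \<le> f y" using assms(3) sub box_subset_cbox by blast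
  ultimately show "f x = 0"
    using has_integral_0_cbox_imp_0[OF cont] ab(2) box_subset_cbox by blast
qed

lemma integral_weighted_square_eq_0_imp_zero:
  fixes p W :: "'a::euclidean_space \<Rightarrow> real"
  assumes K: "compact K" "convex K" "interior K \<noteq> {}"
    and cont: "continuous_on K p" "continuous_on K W"
    and p_nonneg: "\<And>x. x \<in> K \<Longrightarrow> 0 \<le> p x" and p_pos: "\<And>x. x \<in> interior K \<Longrightarrow> 0 < p x"
    and "integral K (\<lambda>x. p x * W x ^ 2) = 0"
  shows "\<forall>x\<in>K. W x = 0"
proof -
  have "continuous_on K (\<lambda>x. p x * W x ^ 2)"
    by (intro continuous_on_mult continuous_on_power cont)
  then have "p x * W x ^ 2 = 0" if "x \<in> interior K" for x
    by (rule integral_nonneg_eq_0_imp_interior[OF K(1) _ _ assms(8) that]) (simp add: p_nonneg)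
  then have "W x = 0" if "x \<in> interior K" for x
    using p_pos[OF that] that by fastforce
  moreover have "closure (interior K) = K"
    using convex_closure_interior[OF K(2,3)] compact_imp_closed[OF K(1)] by simp
  ultimately show ?thesis
    using continuous_constant_on_closure[of "interior K" W] cont(2) by metis
qed

lemma poly_perp_inner:
  fixes q :: "real^'n \<Rightarrow> real^'n"
  assumes "compact K" "\<And>j. poly_perp K k (\<lambda>x. q x $ j)"
  shows "poly_perp K k (\<lambda>x. q x \<bullet> a)"
proof -
  have poly: "poly_le k (\<lambda>x. q x $ j)" for j using assms(2) unfolding poly_perp_def by blast
  have inner_eq: "(\<lambda>x. q x \<bullet> a) = (\<lambda>x. \<Sum>j\<in>UNIV. a $ j * q x $ j)"
    by (simp add: inner_vec_def mult.commute)
  have "L2_inner K (\<lambda>x. q x \<bullet> a) v = 0" if "k \<noteq> 0" "poly_le (k - 1) v" for v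
  proof -
    have "(\<lambda>x. a $ j * (q x $ j * v x)) integrable_on K" for j
      by (intro integrable_continuous_compact[OF assms(1)]
          continuous_on_poly_le[OF poly_le_cmult[OF poly_le_mult[OF poly that(2)]]])
    then have "integral K (\<lambda>x. \<Sum>j\<in>UNIV. a $ j * (q x $ j * v x))
        = (\<Sum>j\<in>UNIV. a $ j * integral K (\<lambda>x. q x $ j * v x))"
      by (subst integral_sum) auto
    also have "\<dots> = 0" using assms(2) that unfolding poly_perp_def L2_inner_def by simp
    finally show ?thesis
      unfolding L2_inner_def inner_eq by (simp add: sum_distrib_right mult.assoc)
  qed
  moreover have "poly_le k (\<lambda>x. q x \<bullet> a)"
    unfolding inner_eq by (intro poly_le_sum poly_le_cmult poly) simp
  ultimately show ?thesis unfolding poly_perp_def by blast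
qed

section \<open>Barycentric coordinates on a simplex\<close>

lemma mem_convex_hull_remove_iff:
  fixes V :: "'a::real_vector set"
  assumes "finite V"
  shows "x \<in> convex hull (V - {a}) \<longleftrightarrow>
    (\<exists>c. (\<forall>v\<in>V. 0 \<le> c v) \<and> sum c V = 1 \<and> c a = 0 \<and> (\<Sum>v\<in>V. c v *\<^sub>R v) = x)"
proof -
  have sum_eq: "sum f V = sum f (V - {a})" if "f a = 0" for f :: "'a \<Rightarrow> 'b::comm_monoid_add"
    using assms that by (intro sum.mono_neutral_right) auto
  show ?thesis
  proof
    assume "x \<in> convex hull (V - {a})"
    then obtain c where c: "\<forall>v\<in>V - {a}. 0 \<le> c v" "sum c (V - {a}) = 1"
        "(\<Sum>v\<in>V - {a}. c v *\<^sub>R v) = x"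
      using assms by (auto simp: convex_hull_finite)
    have "sum (c(a := 0)) (V - {a}) = sum c (V - {a})"
      "(\<Sum>v\<in>V - {a}. (c(a := 0)) v *\<^sub>R v) = (\<Sum>v\<in>V - {a}. c v *\<^sub>R v)"
      by (auto intro: sum.cong)
    then show "\<exists>c. (\<forall>v\<in>V. 0 \<le> c v) \<and> sum c V = 1 \<and> c a = 0 \<and> (\<Sum>v\<in>V. c v *\<^sub>R v) = x"
      using c sum_eq[of "c(a := 0)"] sum_eq[of "\<lambda>v. (c(a := 0)) v *\<^sub>R v"]
      by (intro exI[of _ "c(a := 0)"]) auto
  next
    assume "\<exists>c. (\<forall>v\<in>V. 0 \<le> c v) \<and> sum c V = 1 \<and> c a = 0 \<and> (\<Sum>v\<in>V. c v *\<^sub>R v) = x"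
    then obtain c where "\<forall>v\<in>V. 0 \<le> c v" "sum c V = 1" "c a = 0" "(\<Sum>v\<in>V. c v *\<^sub>R v) = x"
      by blast
    then show "x \<in> convex hull (V - {a})"
      using assms sum_eq[of c] sum_eq[of "\<lambda>v. c v *\<^sub>R v"]
      by (auto simp: convex_hull_finite intro!: exI[of _ c])
  qed
qed

text \<open>The matrix \<open>M\<close> has the edge vectors \<open>g i - w\<close> as columns, so \<open>y \<mapsto> w + M y\<close> maps the
  reference simplex onto \<open>convex hull V\<close>, and \<open>bary x $ i\<close> is the barycentric coordinate of \<open>x\<close>
  belonging to the vertex \<open>g i\<close>.\<close>
locale simplex_frame =
  fixes V :: "(real^'n) set" and w :: "real^'n" and g :: "'n \<Rightarrow> real^'n"
  assumes finite_V: "finite V" and affine_independent: "\<not> affine_dependent V"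
    and base_in_V: "w \<in> V" and bij_vertices: "bij_betw g UNIV (V - {w})"
begin

definition M :: "real^'n^'n" where "M = (\<chi> r c. (g c - w) $ r)"

definition bary :: "real^'n \<Rightarrow> real^'n" where "bary x = matrix_inv M *v (x - w)"

lemma vertex_in_V: "g i \<in> V" and vertex_neq_base: "g i \<noteq> w"
  using bij_vertices by (auto simp: bij_betw_def)

lemma sum_V: "(\<Sum>v\<in>V. f v) = f w + (\<Sum>i\<in>UNIV. f (g i))"
proof -
  have "(\<Sum>v\<in>V. f v) = f w + (\<Sum>v\<in>V - {w}. f v)"
    using finite_V base_in_V by (simp add: sum.remove)
  then show ?thesis using sum.reindex_bij_betw[OF bij_vertices, of f] by simp
qed

lemma M_mult: "M *v y = (\<Sum>i\<in>UNIV. y $ i *\<^sub>R (g i - w))"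
  by (simp add: M_def matrix_vector_mult_def vec_eq_iff sum_component mult.commute)

lemma convex_combination_eq:
  assumes "sum c V = 1"
  shows "(\<Sum>v\<in>V. c v *\<^sub>R v) = w + M *v (\<chi> i. c (g i))"
proof -
  have "c w = 1 - (\<Sum>i\<in>UNIV. c (g i))" using assms sum_V[of c] by simp
  then show ?thesis
    using sum_V[of "\<lambda>v. c v *\<^sub>R v"]
    by (simp add: M_mult scaleR_diff_right scaleR_diff_left sum_subtractf scaleR_sum_left)
qed

lemma inj_M: "inj ((*v) M)"
proof -
  have "y = 0" if "M *v y = 0" for y
  proof (rule ccontr)
    assume "y \<noteq> 0"
    then obtain i where i: "y $ i \<noteq> 0" by (auto simp: vec_eq_iff)
    define c where "c = (\<lambda>v. if v = w then - (\<Sum>j\<in>UNIV. y $ j) else y $ inv_into UNIV g v)"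
    have c_vertex: "c (g j) = y $ j" for j
      using vertex_neq_base[of j] bij_vertices by (simp add: c_def bij_betw_def inv_into_f_f)
    have "sum c V = 0" using sum_V[of c] unfolding c_vertex by (simp add: c_def)
    moreover have "(\<Sum>v\<in>V. c v *\<^sub>R v) = 0"
      using sum_V[of "\<lambda>v. c v *\<^sub>R v"] that unfolding c_vertex
      by (simp add: M_mult c_def scaleR_diff_right sum_subtractf scaleR_sum_left)
    moreover have "\<exists>v\<in>V. c v \<noteq> 0" using vertex_in_V c_vertex i by metis
    ultimately have "affine_dependent V"
      unfolding affine_dependent_explicit_finite[OF finite_V] by blast
    with affine_independent show False by simp
  qed
  then show ?thesis
    unfolding inj_on_def by (metis eq_iff_diff_eq_0 matrix_vector_mult_diff_distrib)
qed

lemma matrix_inv_M: "matrix_inv M ** M = mat 1" "M ** matrix_inv M = mat 1"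
proof -
  have "invertible M"
    using inj_M by (simp add: invertible_left_inverse matrix_left_invertible_injective)
  then have "M ** matrix_inv M = mat 1 \<and> matrix_inv M ** M = mat 1"
    unfolding invertible_def matrix_inv_def by (rule someI_ex)
  then show "matrix_inv M ** M = mat 1" "M ** matrix_inv M = mat 1" by auto
qed

lemma bary_frame_point: "bary (w + M *v y) = y"
  by (simp add: bary_def matrix_vector_mul_assoc matrix_inv_M)

lemma frame_point_bary: "w + M *v bary x = x"
  by (simp add: bary_def matrix_vector_mul_assoc matrix_inv_M)

lemma bary_convex_combination: "sum c V = 1 \<Longrightarrow> bary (\<Sum>v\<in>V. c v *\<^sub>R v) = (\<chi> i. c (g i))"
  by (simp only: convex_combination_eq bary_frame_point)

lemma bary_component: "bary x $ i = matrix_inv M $ i \<bullet> (x - w)"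
  by (simp add: bary_def matrix_vector_mult_def inner_vec_def)

lemma poly_le_bary: "poly_le 1 (\<lambda>x. bary x $ i)"
proof -
  have "(\<lambda>x. bary x $ i) = (\<lambda>x. (\<Sum>j\<in>UNIV. matrix_inv M $ i $ j * x $ j)
      + - (\<Sum>j\<in>UNIV. matrix_inv M $ i $ j * w $ j))"
    by (simp add: bary_def matrix_vector_mult_def algebra_simps sum_subtractf)
  then show ?thesis by (simp only: poly_le_affine)
qed

lemma poly_le_frame_point: "poly_le 1 (\<lambda>y. (w + M *v y) $ i)"
proof -
  have "(\<lambda>y. (w + M *v y) $ i) = (\<lambda>y. (\<Sum>j\<in>UNIV. M $ i $ j * y $ j) + w $ i)"
    by (simp add: matrix_vector_mult_def algebra_simps)
  then show ?thesis by (simp only: poly_le_affine)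
qed

lemma bary_in_convex_hull:
  assumes "x \<in> convex hull V"
  shows "0 \<le> bary x $ i" and "(\<Sum>j\<in>UNIV. bary x $ j) \<le> 1"
proof -
  obtain c where c: "\<forall>v\<in>V. 0 \<le> c v" "sum c V = 1" "(\<Sum>v\<in>V. c v *\<^sub>R v) = x"
    using assms finite_V by (auto simp: convex_hull_finite)
  have bary: "bary x = (\<chi> i. c (g i))" using bary_convex_combination[OF c(2)] c(3) by simp
  then show "0 \<le> bary x $ i" using c(1) vertex_in_V by simp
  show "(\<Sum>j\<in>UNIV. bary x $ j) \<le> 1" using c(1)[rule_format, OF base_in_V] c(2) sum_V[of c] bary by simp
qed

lemma bary_on_face:
  assumes "x \<in> convex hull (V - {g j})" shows "bary x $ j = 0"
proof -
  obtain c where "sum c V = 1" "c (g j) = 0" "(\<Sum>v\<in>V. c v *\<^sub>R v) = x"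
    using assms mem_convex_hull_remove_iff[OF finite_V] by blast
  then show ?thesis using bary_convex_combination by force
qed

lemma frame_point_in_face:
  assumes "\<And>i. 0 \<le> y $ i" "(\<Sum>i\<in>UNIV. y $ i) \<le> 1" "y $ j = 0"
  shows "w + M *v y \<in> convex hull (V - {g j})"
proof -
  define c where "c = (\<lambda>v. if v = w then 1 - (\<Sum>i\<in>UNIV. y $ i) else y $ inv_into UNIV g v)"
  have c_vertex: "c (g i) = y $ i" for i
    using vertex_neq_base[of i] bij_vertices by (simp add: c_def bij_betw_def inv_into_f_f)
  have "sum c V = 1" using sum_V[of c] unfolding c_vertex by (simp add: c_def)
  moreover have "0 \<le> c v" if v: "v \<in> V" for v
  proof (cases "v = w")
    case False
    then obtain i where "v = g i" using v bij_vertices by (auto simp: bij_betw_def)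
    then show ?thesis using assms(1) c_vertex by simp
  qed (use assms(2) c_def in simp)
  moreover have "(\<Sum>v\<in>V. c v *\<^sub>R v) = w + M *v y"
    using convex_combination_eq[OF \<open>sum c V = 1\<close>] by (simp add: c_vertex)
  moreover have "c (g j) = 0" using assms(3) c_vertex by simp
  ultimately show ?thesis unfolding mem_convex_hull_remove_iff[OF finite_V] by blast
qed

lemma interior_convex_hull_eq:
  "interior (convex hull V) =
    {x. \<exists>c. (\<forall>v\<in>V. 0 < c v \<and> c v < 1) \<and> sum c V = 1 \<and> (\<Sum>v\<in>V. c v *\<^sub>R v) = x}"
proof -
  have "\<not> card V \<le> DIM(real^'n)" using sum_V[of "\<lambda>_. 1::nat"] finite_V by simp
  then show ?thesis by (simp add: interior_convex_hull_explicit[OF affine_independent])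
qed

lemma interior_convex_hull_nonempty: "interior (convex hull V) \<noteq> {}"
proof -
  have card: "real (card V) > 1" using sum_V[of "\<lambda>_. 1::nat"] finite_V by simp
  then have "(\<Sum>v\<in>V. (1 / real (card V)) *\<^sub>R v) \<in> interior (convex hull V)"
    unfolding interior_convex_hull_eq by (intro CollectI exI[of _ "\<lambda>_. 1 / real (card V)"]) simp
  then show ?thesis by blast
qed

lemma bary_pos_interior:
  assumes "x \<in> interior (convex hull V)" shows "0 < bary x $ i"
proof -
  obtain c where c: "\<forall>v\<in>V. 0 < c v \<and> c v < 1" "sum c V = 1" "(\<Sum>v\<in>V. c v *\<^sub>R v) = x"
    using assms unfolding interior_convex_hull_eq by blast
  then show ?thesis using bary_convex_combination[OF c(2)] vertex_in_V by auto
qed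

section \<open>Vanishing on faces\<close>

lemma row_matrix_inv_M_nonzero: "matrix_inv M $ i \<noteq> 0"
proof
  assume "matrix_inv M $ i = 0"
  then have "(matrix_inv M ** M) $ i $ i = 0" by (simp add: matrix_matrix_mult_def)
  then show False by (simp add: matrix_inv_M mat_def)
qed

lemma outward_normal_face:
  "outward_normal (convex hull V) (convex hull (V - {g i}))
     (- (1 / norm (matrix_inv M $ i)) *\<^sub>R matrix_inv M $ i)"
proof -
  let ?r = "matrix_inv M $ i"
  have norm_r: "norm ?r \<noteq> 0" using row_matrix_inv_M_nonzero by simp
  have diff: "?r \<bullet> (x - y) = bary x $ i - bary y $ i" for x y
    by (simp add: bary_component inner_diff_right)
  show ?thesis unfolding outward_normal_def
  proof (intro conjI ballI)
    show "norm (- (1 / norm ?r) *\<^sub>R ?r) = 1" using norm_r by simp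
  next
    fix x y assume "x \<in> convex hull (V - {g i})" "y \<in> convex hull (V - {g i})"
    then show "(- (1 / norm ?r) *\<^sub>R ?r) \<bullet> (x - y) = 0"
      using bary_on_face diff[of x y] by simp
  next
    fix x y assume "x \<in> convex hull (V - {g i})" "y \<in> convex hull V"
    then show "(- (1 / norm ?r) *\<^sub>R ?r) \<bullet> (y - x) \<le> 0"
      using bary_on_face bary_in_convex_hull(1) diff[of y x] norm_r by simp
  qed
qed

text \<open>Pulled back to the reference simplex, \<open>u\<close> vanishes on the hyperplane \<open>y\<^sub>j = 0\<close>.\<close>
lemma poly_le_vanishing_on_face_factor:
  assumes "poly_le k u" "\<forall>x\<in>convex hull (V - {g j}). u x = 0"
  obtains W where "poly_le (k - 1) W" "k = 0 \<Longrightarrow> W = (\<lambda>_. 0)"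
    "\<And>x. x \<in> convex hull V \<Longrightarrow> u x = bary x $ j * W x"
proof -
  have "poly_le k (\<lambda>y. u (w + M *v y))"
    by (rule poly_le_compose[OF assms(1) poly_le_frame_point])
  then obtain W0 where W0: "poly_le (k - 1) W0" "k = 0 \<Longrightarrow> W0 = (\<lambda>_. 0)"
    "\<And>y. u (w + M *v y) = u (w + M *v (\<chi> i. if i = j then 0 else y $ i)) + y $ j * W0 y"
    by (rule poly_le_split_component[where i = j]) (rule that)
  have "u x = bary x $ j * W0 (bary x)" if x: "x \<in> convex hull V" for x
  proof -
    let ?y = "bary x"
    let ?z = "(\<chi> i. if i = j then 0 else ?y $ i) :: real^'n"
    have "(\<Sum>i\<in>UNIV. ?z $ i) \<le> (\<Sum>i\<in>UNIV. ?y $ i)"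
      using bary_in_convex_hull(1)[OF x] by (intro sum_mono) simp
    also have "\<dots> \<le> 1" by (rule bary_in_convex_hull(2)[OF x])
    finally have "w + M *v ?z \<in> convex hull (V - {g j})"
      using bary_in_convex_hull(1)[OF x] by (intro frame_point_in_face) auto
    then show ?thesis using assms(2) W0(3)[of ?y] by (simp add: frame_point_bary)
  qed
  moreover have "poly_le (k - 1) (\<lambda>x. W0 (bary x))"
    by (rule poly_le_compose[OF W0(1) poly_le_bary])
  ultimately show ?thesis using that W0(2) by fastforce
qed

lemma poly_perp_vanishing_on_face:
  assumes perp: "poly_perp (convex hull V) k u"
    and face: "\<forall>x\<in>convex hull (V - {g j}). u x = 0"
  shows "\<forall>x\<in>convex hull V. u x = 0"
proof -
  let ?K = "convex hull V"
  obtain W where W: "poly_le (k - 1) W" "k = 0 \<Longrightarrow> W = (\<lambda>_. 0)"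
      "\<And>x. x \<in> ?K \<Longrightarrow> u x = bary x $ j * W x"
    using perp face poly_le_vanishing_on_face_factor unfolding poly_perp_def by metis
  have "\<forall>x\<in>?K. W x = 0"
  proof (cases "k = 0")
    case False
    have "integral ?K (\<lambda>x. bary x $ j * W x ^ 2) = L2_inner ?K u W"
      unfolding L2_inner_def by (rule integral_cong) (simp add: W(3) power2_eq_square)
    also have "\<dots> = 0" using perp False W(1) unfolding poly_perp_def by blast
    finally show ?thesis
      using compact_convex_hull[OF finite_imp_compact[OF finite_V]]
        interior_convex_hull_nonempty bary_in_convex_hull(1) bary_pos_interior
        continuous_on_poly_le[OF poly_le_bary] continuous_on_poly_le[OF W(1)]
      by (intro integral_weighted_square_eq_0_imp_zero) auto
  qed (simp add: W(2))
  then show ?thesis using W(3) by simp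
qed

lemma poly_perp_normal_trace_vanishing:
  assumes perp: "\<forall>i. poly_perp (convex hull V) k (\<lambda>x. q x $ i)"
    and normal: "\<forall>e\<in>simplex_faces V. \<forall>n. outward_normal (convex hull V) e n \<longrightarrow> (\<forall>x\<in>e. q x \<bullet> n = 0)"
  shows "\<forall>x\<in>convex hull V. q x = 0"
proof -
  let ?K = "convex hull V"
  have row: "q x \<bullet> matrix_inv M $ i = 0" if x: "x \<in> ?K" for x i
  proof -
    let ?r = "matrix_inv M $ i"
    have "convex hull (V - {g i}) \<in> simplex_faces V"
      unfolding simplex_faces_def using vertex_in_V by blast
    then have "\<forall>y\<in>convex hull (V - {g i}). q y \<bullet> ?r = 0"
      using normal outward_normal_face row_matrix_inv_M_nonzero by fastforce
    moreover have "poly_perp ?K k (\<lambda>y. q y \<bullet> ?r)"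
      using perp compact_convex_hull[OF finite_imp_compact[OF finite_V]] by (intro poly_perp_inner) auto
    ultimately show ?thesis using poly_perp_vanishing_on_face x by blast
  qed
  show ?thesis
  proof
    fix x assume "x \<in> ?K"
    then have "matrix_inv M *v q x = 0"
      using row by (simp add: vec_eq_iff matrix_vector_mult_def inner_vec_def mult.commute)
    then show "q x = 0"
      by (metis matrix_vector_mul_assoc matrix_inv_M(2) matrix_vector_mul_lid matrix_vector_mult_0_right)
  qed
qed

end

lemma simplex_frame_exists:
  fixes V :: "(real^'n) set"
  assumes "card V = CARD('n) + 1" "\<not> affine_dependent V" "w \<in> V"
  obtains g where "simplex_frame V w g"
proof -
  have "finite V" using assms(1) by (intro card_ge_0_finite) simp
  moreover have "card (V - {w}) = CARD('n)" using assms calculation by simp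
  ultimately obtain g :: "'n \<Rightarrow> real^'n" where "bij_betw g UNIV (V - {w})"
    using finite_same_card_bij[of "UNIV :: 'n set" "V - {w}"] by auto
  then show ?thesis using that assms \<open>finite V\<close> by (simp add: simplex_frame_def)
qed

theorem lemma2p1:
  fixes V :: "(real^'n) set" and k :: nat
  assumes dim: "CARD('n) = 2 \<or> CARD('n) = 3"
    and card: "card V = CARD('n) + 1"
    and indep: "\<not> affine_dependent V"
  shows "(\<forall>u e. poly_perp (convex hull V) k u \<and> e \<in> simplex_faces V \<and> (\<forall>x\<in>e. u x = 0)
            \<longrightarrow> (\<forall>x\<in>convex hull V. u x = 0))
       \<and> (\<forall>q :: real^'n \<Rightarrow> real^'n.
            (\<forall>i. poly_perp (convex hull V) k (\<lambda>x. q x $ i)) \<and>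
            (\<forall>e\<in>simplex_faces V. \<forall>n. outward_normal (convex hull V) e n \<longrightarrow> (\<forall>x\<in>e. q x \<bullet> n = 0))
            \<longrightarrow> (\<forall>x\<in>convex hull V. q x = 0))"
proof (intro conjI allI impI; elim conjE)
  fix u e
  assume u: "poly_perp (convex hull V) k u" and "e \<in> simplex_faces V" and e: "\<forall>x\<in>e. u x = 0"
  then obtain v where v: "v \<in> V" "e = convex hull (V - {v})" by (auto simp: simplex_faces_def)
  have "card (V - {v}) = CARD('n)" using card v by (simp add: card_ge_0_finite)
  then have "V - {v} \<noteq> {}" by (metis card.empty less_irrefl zero_less_card_finite)
  then obtain w where w: "w \<in> V" "w \<noteq> v" by blast
  obtain g where "simplex_frame V w g" using simplex_frame_exists[OF card indep w(1)] .
  then interpret simplex_frame V w g .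
  obtain j where "v = g j" using v w bij_vertices by (auto simp: bij_betw_def)
  then show "\<forall>x\<in>convex hull V. u x = 0"
    using poly_perp_vanishing_on_face[OF u] e v(2) by blast
next
  fix q :: "real^'n \<Rightarrow> real^'n"
  assume perp: "\<forall>i. poly_perp (convex hull V) k (\<lambda>x. q x $ i)"
    and normal: "\<forall>e\<in>simplex_faces V. \<forall>n. outward_normal (convex hull V) e n \<longrightarrow> (\<forall>x\<in>e. q x \<bullet> n = 0)"
  obtain w where "w \<in> V" using card by fastforce
  then obtain g where frame: "simplex_frame V w g" using simplex_frame_exists[OF card indep] by blast
  show "\<forall>x\<in>convex hull V. q x = 0"
    by (rule simplex_frame.poly_perp_normal_trace_vanishing[OF frame perp normal])
qed

end
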